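(* Suppose that an $(R,M,\epsilon)$-code exists for a given DMC with feedback. Then for every $0<\alpha<1$ there also exists an $(R',M,\epsilon')$-code for the same channel, where $$R'=(1-\alpha)^{-1}R,\qquad \epsilon'=\alpha+\epsilon-\alpha\epsilon.$$
   Context: All logarithms are to base 2. A DMC has finite input and output alphabets and transition probabilities $p(y\mid x)$, used memorylessly, with noiseless feedback from receiver to transmitter. A rateless code for $M$ equiprobable messages $W\in\{1,\dots,M\}$ consists of infinite-length codewords $\mathbf c_w\in\mathcal X^\infty$ (generated randomly i.i.d. from an input prior $q$), an encoder that transmits the symbols of $\mathbf c_W$ one by one, and a decoder that after receiving $y^n$ outputs $g_n(y^n)\in\{0,1,\dots,M\}$ ($0$ meaning "wait"); decoders may use private randomness, and may terminate a transmission immediately (before receiving any symbol, i.e. with stopping time $0$) by declaring an error. The stopping time $T$ is the time at which the decoder makes its decision $\hat W$. The error probability is $P_e=\frac1M\sum_w\Pr\{\hat W\ne w\mid W=w\}$ and the effective rate is $R=\log M/\mathbb E\{T\}$, with expectation over codebook, message, channel (and decoder randomness). An $(R,M,\epsilon)$-code is a rateless code with effective rate $R$, $M$ messages and $P_e\le\epsilon$. *)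

theory Defs
  imports "HOL-Probability.Probability"
begin

text \<open>
A DMC with finite input type 'x and finite output type 'y is a map
  W :: 'x => 'y pmf  (W x is the output distribution p(. | x)).
Messages are 1..M.  A codebook is  c :: nat => nat => 'x  with  c w i  the
i-th symbol (i = 0,1,2,...) of codeword c_w.  The codebook is random with all
symbols c w i (w in 1..M, i in nat) i.i.d. according to the input prior q.
The decoder's private randomness is a single uniform random variable U on [0,1]
(this generates any standard randomness).  A decoder is a function
  g :: (nat => nat => 'x) => real => 'y list => nat
where  g c u ys  is the decision after receiving the output prefix ys:
0 means "wait", a value in 1..M is the decoded message, and any other value
(> M) means "declare an error".

Since for a fixed transmitted message w the pairs (column of the codebook at
time i, channel output at time i) are i.i.d. over i, the joint law of codebook
and channel outputs is the infinite product of the one-step law below.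
\<close>

definition col_pmf :: "'x pmf \<Rightarrow> nat \<Rightarrow> (nat \<Rightarrow> 'x) pmf" where
  "col_pmf q M = Pi_pmf {1..M} undefined (\<lambda>_. q)"

definition step_pmf :: "('x \<Rightarrow> 'y pmf) \<Rightarrow> 'x pmf \<Rightarrow> nat \<Rightarrow> nat \<Rightarrow> ((nat \<Rightarrow> 'x) \<times> 'y) pmf" where
  "step_pmf W q M w = bind_pmf (col_pmf q M) (\<lambda>col. map_pmf (\<lambda>y. (col, y)) (W (col w)))"

definition joint :: "('x \<Rightarrow> 'y pmf) \<Rightarrow> 'x pmf \<Rightarrow> nat \<Rightarrow> nat
    \<Rightarrow> ((nat \<Rightarrow> (nat \<Rightarrow> 'x) \<times> 'y) \<times> real) measure" where
  "joint W q M w =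
     (PiM UNIV (\<lambda>_::nat. measure_pmf (step_pmf W q M w)))
       \<Otimes>\<^sub>M uniform_measure lborel {0..1}"

definition codebook_of :: "(nat \<Rightarrow> (nat \<Rightarrow> 'x) \<times> 'y) \<Rightarrow> nat \<Rightarrow> nat \<Rightarrow> 'x" where
  "codebook_of Z = (\<lambda>w i. fst (Z i) w)"

definition prefix_of :: "(nat \<Rightarrow> (nat \<Rightarrow> 'x) \<times> 'y) \<Rightarrow> nat \<Rightarrow> 'y list" where
  "prefix_of Z n = map (\<lambda>i. snd (Z i)) [0..<n]"

definition dec_at :: "((nat \<Rightarrow> nat \<Rightarrow> 'x) \<Rightarrow> real \<Rightarrow> 'y list \<Rightarrow> nat)
    \<Rightarrow> (nat \<Rightarrow> (nat \<Rightarrow> 'x) \<times> 'y) \<times> real \<Rightarrow> nat \<Rightarrow> nat" where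
  "dec_at g zu n = g (codebook_of (fst zu)) (snd zu) (prefix_of (fst zu) n)"

definition stop_time :: "((nat \<Rightarrow> nat \<Rightarrow> 'x) \<Rightarrow> real \<Rightarrow> 'y list \<Rightarrow> nat)
    \<Rightarrow> (nat \<Rightarrow> (nat \<Rightarrow> 'x) \<times> 'y) \<times> real \<Rightarrow> enat" where
  "stop_time g zu = (if \<exists>n. dec_at g zu n \<noteq> 0 then enat (LEAST n. dec_at g zu n \<noteq> 0) else \<infinity>)"

definition decodes_correctly :: "((nat \<Rightarrow> nat \<Rightarrow> 'x) \<Rightarrow> real \<Rightarrow> 'y list \<Rightarrow> nat)
    \<Rightarrow> nat \<Rightarrow> (nat \<Rightarrow> (nat \<Rightarrow> 'x) \<times> 'y) \<times> real \<Rightarrow> bool" where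
  "decodes_correctly g w zu =
     (\<exists>n. stop_time g zu = enat n \<and> dec_at g zu n = w)"

definition decoder_measurable :: "('x \<Rightarrow> 'y pmf) \<Rightarrow> 'x pmf \<Rightarrow> nat
    \<Rightarrow> ((nat \<Rightarrow> nat \<Rightarrow> 'x) \<Rightarrow> real \<Rightarrow> 'y list \<Rightarrow> nat) \<Rightarrow> bool" where
  "decoder_measurable W q M g =
     (\<forall>w\<in>{1..M}. \<forall>n d. {zu \<in> space (joint W q M w). dec_at g zu n = d} \<in> sets (joint W q M w))"

definition exp_stop_time :: "('x \<Rightarrow> 'y pmf) \<Rightarrow> 'x pmf \<Rightarrow> nat
    \<Rightarrow> ((nat \<Rightarrow> nat \<Rightarrow> 'x) \<Rightarrow> real \<Rightarrow> 'y list \<Rightarrow> nat) \<Rightarrow> ennreal" where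
  "exp_stop_time W q M g =
     (\<Sum>w\<in>{1..M}. \<integral>\<^sup>+ zu. ennreal_of_enat (stop_time g zu) \<partial>joint W q M w) / of_nat M"

definition error_prob :: "('x \<Rightarrow> 'y pmf) \<Rightarrow> 'x pmf \<Rightarrow> nat
    \<Rightarrow> ((nat \<Rightarrow> nat \<Rightarrow> 'x) \<Rightarrow> real \<Rightarrow> 'y list \<Rightarrow> nat) \<Rightarrow> real" where
  "error_prob W q M g =
     (\<Sum>w\<in>{1..M}. measure (joint W q M w)
        {zu \<in> space (joint W q M w). \<not> decodes_correctly g w zu}) / real M"

definition is_code :: "('x \<Rightarrow> 'y pmf) \<Rightarrow> 'x pmf \<Rightarrow> ((nat \<Rightarrow> nat \<Rightarrow> 'x) \<Rightarrow> real \<Rightarrow> 'y list \<Rightarrow> nat)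
    \<Rightarrow> real \<Rightarrow> nat \<Rightarrow> real \<Rightarrow> bool" where
  "is_code W q g R M eps =
     (M \<ge> 1 \<and> decoder_measurable W q M g \<and>
      0 < exp_stop_time W q M g \<and> exp_stop_time W q M g < \<infinity> \<and>
      R = log 2 (real M) / enn2real (exp_stop_time W q M g) \<and>
      error_prob W q M g \<le> eps)"

end

theory Submission
  imports Defs
begin

text \<open>
The decoder spends the first portion of its private randomness on a coin: if \<open>U \<le> \<alpha>\<close>
it declares an error before receiving anything (\<open>T = 0\<close>), otherwise it runs the given
decoder with the fresh uniform variable \<open>(U - \<alpha>) / (1 - \<alpha>)\<close>. Hence \<open>E{T}\<close> is multiplied
by \<open>1 - \<alpha>\<close> and the error probability becomes \<open>\<alpha> + (1 - \<alpha>) P\<^sub>e\<close>.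
\<close>

abbreviation unit_uniform :: "real measure" where
  "unit_uniform \<equiv> uniform_measure lborel {0..1}"

abbreviation rescale_snd :: "real \<Rightarrow> 'a \<times> real \<Rightarrow> 'a \<times> real" where
  "rescale_snd a zu \<equiv> (fst zu, (snd zu - a) / (1 - a))"

lemma prob_space_unit_uniform: "prob_space unit_uniform"
  by (rule prob_space_uniform_measure) auto

lemma nn_integral_unit_uniform:
  "f \<in> borel_measurable borel
    \<Longrightarrow> (\<integral>\<^sup>+u. f u \<partial>unit_uniform) = (\<integral>\<^sup>+u. f u * indicator {0..1} u \<partial>lborel)"
  by (subst nn_integral_uniform_measure) (simp_all add: divide_ennreal_def)

lemma nn_integral_unit_uniform_split:
  fixes f :: "real \<Rightarrow> ennreal"
  assumes f[measurable]: "f \<in> borel_measurable borel" and a: "0 < a" "a < 1"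
  shows "(\<integral>\<^sup>+u. (if u \<le> a then c else f ((u - a) / (1 - a))) \<partial>unit_uniform)
         = ennreal a * c + ennreal (1 - a) * (\<integral>\<^sup>+v. f v \<partial>unit_uniform)"
proof -
  have "(\<integral>\<^sup>+u. (if u \<le> a then c else f ((u - a) / (1 - a))) \<partial>unit_uniform)
      = (\<integral>\<^sup>+u. c * indicator {0..a} u + f ((u - a) / (1 - a)) * indicator {a<..1} u \<partial>lborel)"
    using a by (subst nn_integral_unit_uniform, measurable) (auto intro!: nn_integral_cong simp: indicator_def)
  also have "\<dots> = (\<integral>\<^sup>+u. c * indicator {0..a} u \<partial>lborel)
                  + (\<integral>\<^sup>+u. f ((u - a) / (1 - a)) * indicator {a<..1} u \<partial>lborel)"
    by (rule nn_integral_add) measurable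
  also have "(\<integral>\<^sup>+u. c * indicator {0..a} u \<partial>lborel) = c * ennreal a"
    using a by (subst nn_integral_cmult_indicator) auto
  also have "(\<integral>\<^sup>+u. f ((u - a) / (1 - a)) * indicator {a<..1} u \<partial>lborel)
      = ennreal \<bar>1 - a\<bar> * (\<integral>\<^sup>+x. f ((a + (1 - a) * x - a) / (1 - a))
                                  * indicator {a<..1} (a + (1 - a) * x) \<partial>lborel)"
  proof (rule nn_integral_real_affine)
    show "(\<lambda>u. f ((u - a) / (1 - a)) * indicator {a<..1} u) \<in> borel_measurable borel" by measurable
  qed (use a in auto)
  also have "(\<integral>\<^sup>+x. f ((a + (1 - a) * x - a) / (1 - a)) * indicator {a<..1} (a + (1 - a) * x) \<partial>lborel)
      = (\<integral>\<^sup>+x. f x * indicator {0<..1} x \<partial>lborel)"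
  proof (intro nn_integral_cong)
    fix x :: real
    have "a < a + (1 - a) * x \<longleftrightarrow> 0 < x" using a by (simp add: zero_less_mult_iff)
    moreover have "a + (1 - a) * x \<le> 1 \<longleftrightarrow> (1 - a) * x \<le> (1 - a) * 1" by (simp only: mult_1_right) linarith
    moreover have "(1 - a) * x \<le> (1 - a) * 1 \<longleftrightarrow> x \<le> 1" using a by (intro mult_le_cancel_left_pos) simp
    ultimately show "f ((a + (1 - a) * x - a) / (1 - a)) * indicator {a<..1} (a + (1 - a) * x)
        = f x * indicator {0<..1} x"
      using a by (simp add: indicator_def)
  qed
  also have "\<dots> = (\<integral>\<^sup>+x. f x * indicator {0..1} x \<partial>lborel)"
  proof (rule nn_integral_cong_AE)
    show "AE x in lborel. f x * indicator {0<..1} x = f x * indicator {0..1} x"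
      using AE_lborel_singleton[of 0] by eventually_elim (auto simp: indicator_def)
  qed
  finally show ?thesis
    using a by (simp add: nn_integral_unit_uniform[OF f] mult.commute)
qed

lemma measurable_rescale_snd:
  "rescale_snd a \<in> measurable (N \<Otimes>\<^sub>M unit_uniform) (N \<Otimes>\<^sub>M unit_uniform)"
  by (rule measurable_Pair) (simp_all add: measurable_cong_sets[OF refl sets_uniform_measure])

lemma measurable_snd_unit_uniform:
  "snd \<in> borel_measurable (N \<Otimes>\<^sub>M unit_uniform)"
  using measurable_snd[of N unit_uniform] by (simp add: measurable_cong_sets[OF refl sets_uniform_measure])

lemma sets_snd_le: "{zu \<in> space (N \<Otimes>\<^sub>M unit_uniform). snd zu \<le> a} \<in> sets (N \<Otimes>\<^sub>M unit_uniform)"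
  using measurable_snd_unit_uniform[of N] by measurable

lemma nn_integral_pair_unit_uniform_split:
  fixes h :: "'a \<times> real \<Rightarrow> ennreal"
  assumes h[measurable]: "h \<in> borel_measurable (N \<Otimes>\<^sub>M unit_uniform)"
    and c[measurable]: "c \<in> borel_measurable N" and a: "0 < a" "a < 1"
  shows "(\<integral>\<^sup>+zu. (if snd zu \<le> a then c (fst zu) else h (rescale_snd a zu)) \<partial>(N \<Otimes>\<^sub>M unit_uniform))
     = ennreal a * (\<integral>\<^sup>+z. c z \<partial>N) + ennreal (1 - a) * (\<integral>\<^sup>+zu. h zu \<partial>(N \<Otimes>\<^sub>M unit_uniform))"
proof -
  interpret U: prob_space unit_uniform by (rule prob_space_unit_uniform)
  have "(\<lambda>zu. h (rescale_snd a zu)) \<in> borel_measurable (N \<Otimes>\<^sub>M unit_uniform)"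
    using measurable_compose[OF measurable_rescale_snd h] by (simp add: o_def)
  then have F: "(\<lambda>zu. if snd zu \<le> a then c (fst zu) else h (rescale_snd a zu))
      \<in> borel_measurable (N \<Otimes>\<^sub>M unit_uniform)"
    by (intro measurable_If[OF measurable_compose[OF measurable_fst c] _ sets_snd_le])
  have h_section: "(\<lambda>v. h (z, v)) \<in> borel_measurable borel" if "z \<in> space N" for z
    using measurable_Pair2[OF h that] by (simp add: measurable_cong_sets[OF sets_uniform_measure refl])
  have [measurable]: "(\<lambda>z. \<integral>\<^sup>+v. h (z, v) \<partial>unit_uniform) \<in> borel_measurable N"
    by (rule U.borel_measurable_nn_integral_fst[OF h])
  have "(\<integral>\<^sup>+zu. (if snd zu \<le> a then c (fst zu) else h (rescale_snd a zu)) \<partial>(N \<Otimes>\<^sub>M unit_uniform))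
      = (\<integral>\<^sup>+z. \<integral>\<^sup>+u. (if u \<le> a then c z else h (z, (u - a) / (1 - a))) \<partial>unit_uniform \<partial>N)"
    using U.nn_integral_fst[OF F, symmetric] by (simp only: fst_conv snd_conv)
  also have "\<dots> = (\<integral>\<^sup>+z. ennreal a * c z + ennreal (1 - a) * (\<integral>\<^sup>+v. h (z, v) \<partial>unit_uniform) \<partial>N)"
    by (intro nn_integral_cong nn_integral_unit_uniform_split[OF h_section a])
  also have "\<dots> = ennreal a * (\<integral>\<^sup>+z. c z \<partial>N)
                  + ennreal (1 - a) * (\<integral>\<^sup>+z. \<integral>\<^sup>+v. h (z, v) \<partial>unit_uniform \<partial>N)"
    by (subst nn_integral_add) (measurable, simp add: nn_integral_cmult)
  also have "(\<integral>\<^sup>+z. \<integral>\<^sup>+v. h (z, v) \<partial>unit_uniform \<partial>N) = (\<integral>\<^sup>+zu. h zu \<partial>(N \<Otimes>\<^sub>M unit_uniform))"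
    by (rule U.nn_integral_fst[OF h])
  finally show ?thesis .
qed

lemma stop_time_eq_enat_iff:
  "stop_time g zu = enat k \<longleftrightarrow> (\<forall>m<k. dec_at g zu m = 0) \<and> dec_at g zu k \<noteq> 0"
proof
  assume h: "stop_time g zu = enat k"
  then have ex: "\<exists>n. dec_at g zu n \<noteq> 0" by (auto simp: stop_time_def split: if_splits)
  then have "k = (LEAST n. dec_at g zu n \<noteq> 0)" using h by (simp add: stop_time_def)
  with ex show "(\<forall>m<k. dec_at g zu m = 0) \<and> dec_at g zu k \<noteq> 0"
    by (metis (mono_tags, lifting) LeastI not_less_Least)
next
  assume h: "(\<forall>m<k. dec_at g zu m = 0) \<and> dec_at g zu k \<noteq> 0"
  then have "(LEAST n. dec_at g zu n \<noteq> 0) = k"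
    by (intro Least_equality) (auto simp: not_less[symmetric])
  with h show "stop_time g zu = enat k" by (auto simp: stop_time_def)
qed

lemma stop_time_eq_infinity_iff: "stop_time g zu = \<infinity> \<longleftrightarrow> (\<forall>n. dec_at g zu n = 0)"
  by (simp add: stop_time_def)

lemma measurable_dec_at:
  assumes "\<And>d. {zu \<in> space J. dec_at g zu n = d} \<in> sets J"
  shows "(\<lambda>zu. dec_at g zu n) \<in> measurable J (count_space UNIV)"
  unfolding measurable_count_space_eq2_countable
proof safe
  fix d :: nat
  have "(\<lambda>zu. dec_at g zu n) -` {d} \<inter> space J = {zu \<in> space J. dec_at g zu n = d}" by auto
  then show "(\<lambda>zu. dec_at g zu n) -` {d} \<inter> space J \<in> sets J" using assms by simp
qed simp

lemma measurable_stop_time: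
  assumes [measurable]: "\<And>n. (\<lambda>zu. dec_at g zu n) \<in> measurable J (count_space UNIV)"
  shows "stop_time g \<in> measurable J (count_space UNIV)"
  unfolding measurable_count_space_eq2_countable
proof safe
  fix x :: enat
  show "stop_time g -` {x} \<inter> space J \<in> sets J"
  proof (cases x)
    case (enat k)
    then have "stop_time g -` {x} \<inter> space J
        = {zu \<in> space J. (\<forall>m. m < k \<longrightarrow> dec_at g zu m = 0) \<and> dec_at g zu k \<noteq> 0}"
      by (auto simp: stop_time_eq_enat_iff)
    also have "\<dots> \<in> sets J" by measurable
    finally show ?thesis .
  next
    case infinity
    then have "stop_time g -` {x} \<inter> space J = {zu \<in> space J. \<forall>n. dec_at g zu n = 0}"
      by (auto simp: stop_time_eq_infinity_iff)
    also have "\<dots> \<in> sets J" by measurable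
    finally show ?thesis .
  qed
qed simp

lemma sets_not_decodes_correctly:
  assumes dec[measurable]: "\<And>n. (\<lambda>zu. dec_at g zu n) \<in> measurable J (count_space UNIV)"
  shows "{zu \<in> space J. \<not> decodes_correctly g w zu} \<in> sets J"
proof -
  have [measurable]: "stop_time g \<in> measurable J (count_space UNIV)"
    by (rule measurable_stop_time[OF dec])
  show ?thesis unfolding decodes_correctly_def by measurable
qed

text \<open>Any decision outside \<open>{0..M}\<close>, here \<open>Suc M\<close>, means "declare an error".\<close>

definition abort_decoder :: "nat \<Rightarrow> real \<Rightarrow> ((nat \<Rightarrow> nat \<Rightarrow> 'x) \<Rightarrow> real \<Rightarrow> 'y list \<Rightarrow> nat)
    \<Rightarrow> ((nat \<Rightarrow> nat \<Rightarrow> 'x) \<Rightarrow> real \<Rightarrow> 'y list \<Rightarrow> nat)" where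
  "abort_decoder M a g = (\<lambda>c u ys. if u \<le> a then Suc M else g c ((u - a) / (1 - a)) ys)"

lemma dec_at_abort_decoder:
  "dec_at (abort_decoder M a g) zu n = (if snd zu \<le> a then Suc M else dec_at g (rescale_snd a zu) n)"
  by (simp add: dec_at_def abort_decoder_def)

lemma stop_time_abort_decoder:
  "stop_time (abort_decoder M a g) zu = (if snd zu \<le> a then 0 else stop_time g (rescale_snd a zu))"
  by (simp add: stop_time_def dec_at_abort_decoder zero_enat_def)

lemma decodes_correctly_abort_decoder:
  "w \<le> M \<Longrightarrow> decodes_correctly (abort_decoder M a g) w zu
     \<longleftrightarrow> snd zu > a \<and> decodes_correctly g w (rescale_snd a zu)"
  by (auto simp: decodes_correctly_def stop_time_abort_decoder dec_at_abort_decoder zero_enat_def)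

lemma measurable_dec_at_abort_decoder:
  assumes "\<And>n. (\<lambda>zu. dec_at g zu n) \<in> measurable (N \<Otimes>\<^sub>M unit_uniform) (count_space UNIV)"
  shows "(\<lambda>zu. dec_at (abort_decoder M a g) zu n) \<in> measurable (N \<Otimes>\<^sub>M unit_uniform) (count_space UNIV)"
  unfolding dec_at_abort_decoder
  by (rule measurable_If[OF measurable_const measurable_compose[OF measurable_rescale_snd assms] sets_snd_le])
    simp

lemma nn_integral_stop_time_abort_decoder:
  assumes "\<And>n. (\<lambda>zu. dec_at g zu n) \<in> measurable (N \<Otimes>\<^sub>M unit_uniform) (count_space UNIV)"
    and a: "0 < a" "a < 1"
  shows "(\<integral>\<^sup>+zu. ennreal_of_enat (stop_time (abort_decoder M a g) zu) \<partial>(N \<Otimes>\<^sub>M unit_uniform))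
       = ennreal (1 - a) * (\<integral>\<^sup>+zu. ennreal_of_enat (stop_time g zu) \<partial>(N \<Otimes>\<^sub>M unit_uniform))"
proof -
  have "(\<lambda>zu. ennreal_of_enat (stop_time g zu)) \<in> borel_measurable (N \<Otimes>\<^sub>M unit_uniform)"
    using measurable_compose[OF measurable_stop_time[OF assms(1)], of ennreal_of_enat borel] by simp
  from nn_integral_pair_unit_uniform_split[OF this _ a, of "\<lambda>_. 0"]
  show ?thesis
    by (simp add: stop_time_abort_decoder if_distrib[of ennreal_of_enat] cong: if_cong)
qed

lemma measure_not_decodes_correctly_abort_decoder:
  assumes dec: "\<And>n. (\<lambda>zu. dec_at g zu n) \<in> measurable (N \<Otimes>\<^sub>M unit_uniform) (count_space UNIV)"
    and N: "prob_space N" and a: "0 < a" "a < 1" and "w \<le> M"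
  defines "J \<equiv> N \<Otimes>\<^sub>M unit_uniform"
  shows "measure J {zu \<in> space J. \<not> decodes_correctly (abort_decoder M a g) w zu}
       = a + (1 - a) * measure J {zu \<in> space J. \<not> decodes_correctly g w zu}"
proof -
  interpret J: prob_space J
    unfolding J_def by (intro prob_space_pair N prob_space_unit_uniform)
  let ?A = "{zu \<in> space J. \<not> decodes_correctly g w zu}"
  let ?A' = "{zu \<in> space J. \<not> decodes_correctly (abort_decoder M a g) w zu}"
  have A: "?A \<in> sets J"
    unfolding J_def by (rule sets_not_decodes_correctly[OF dec])
  have A': "?A' \<in> sets J"
    unfolding J_def by (rule sets_not_decodes_correctly[OF measurable_dec_at_abort_decoder[OF dec]])
  have "emeasure J ?A' = (\<integral>\<^sup>+zu. (if snd zu \<le> a then 1 else indicator ?A (rescale_snd a zu)) \<partial>J)"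
  proof (subst nn_integral_indicator[OF A', symmetric], intro nn_integral_cong)
    fix zu assume zu: "zu \<in> space J"
    then have "rescale_snd a zu \<in> space J"
      unfolding J_def by (rule measurable_space[OF measurable_rescale_snd])
    with zu \<open>w \<le> M\<close> show "indicator ?A' zu = (if snd zu \<le> a then 1 else indicator ?A (rescale_snd a zu))"
      by (auto simp: indicator_def decodes_correctly_abort_decoder)
  qed
  also have "\<dots> = ennreal a * emeasure N (space N) + ennreal (1 - a) * emeasure J ?A"
    using nn_integral_pair_unit_uniform_split[of "indicator ?A" N "\<lambda>_. 1", OF _ _ a] A
    unfolding J_def by simp
  finally have "ennreal (measure J ?A') = ennreal (a + (1 - a) * measure J ?A)"
    using a by (simp add: J.emeasure_eq_measure prob_space.emeasure_space_1[OF N] ennreal_mult ennreal_plus)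
  then show ?thesis
    using a by (subst (asm) ennreal_inj) auto
qed

lemma joint_eq_pair_unit_uniform:
  "joint W q M w = PiM UNIV (\<lambda>_. measure_pmf (step_pmf W q M w)) \<Otimes>\<^sub>M unit_uniform"
  by (simp add: joint_def)

lemma prob_space_step_process: "prob_space (PiM UNIV (\<lambda>_. measure_pmf (step_pmf W q M w)))"
  by (intro prob_space_PiM measure_pmf.prob_space_axioms)

lemma measurable_dec_at_joint:
  "decoder_measurable W q M g \<Longrightarrow> w \<in> {1..M}
    \<Longrightarrow> (\<lambda>zu. dec_at g zu n) \<in> measurable (joint W q M w) (count_space UNIV)"
  unfolding decoder_measurable_def by (intro measurable_dec_at) auto

lemma decoder_measurable_abort_decoder:
  assumes "decoder_measurable W q M g"
  shows "decoder_measurable W q M (abort_decoder M a g)"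
  unfolding decoder_measurable_def
proof (intro ballI allI)
  fix w n d assume "w \<in> {1..M}"
  from measurable_dec_at_abort_decoder[OF measurable_dec_at_joint[OF assms this, unfolded joint_eq_pair_unit_uniform]]
  have "Measurable.pred (joint W q M w) (\<lambda>zu. dec_at (abort_decoder M a g) zu n = d)"
    unfolding joint_eq_pair_unit_uniform by (intro pred_count_space_const1)
  then show "{zu \<in> space (joint W q M w). dec_at (abort_decoder M a g) zu n = d} \<in> sets (joint W q M w)"
    by (simp add: pred_def)
qed

lemma exp_stop_time_abort_decoder:
  assumes "decoder_measurable W q M g" and "0 < a" "a < 1"
  shows "exp_stop_time W q M (abort_decoder M a g) = ennreal (1 - a) * exp_stop_time W q M g"
proof -
  have "(\<integral>\<^sup>+zu. ennreal_of_enat (stop_time (abort_decoder M a g) zu) \<partial>joint W q M w)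
      = ennreal (1 - a) * (\<integral>\<^sup>+zu. ennreal_of_enat (stop_time g zu) \<partial>joint W q M w)"
    if "w \<in> {1..M}" for w
    using nn_integral_stop_time_abort_decoder[OF
        measurable_dec_at_joint[OF assms(1) that, unfolded joint_eq_pair_unit_uniform] assms(2,3)]
    unfolding joint_eq_pair_unit_uniform .
  then show ?thesis
    unfolding exp_stop_time_def by (simp add: sum_distrib_left ennreal_times_divide)
qed

lemma error_prob_abort_decoder:
  assumes "decoder_measurable W q M g" and "0 < a" "a < 1" and "M \<ge> 1"
  shows "error_prob W q M (abort_decoder M a g) = a + (1 - a) * error_prob W q M g"
proof -
  let ?P = "\<lambda>g w. measure (joint W q M w) {zu \<in> space (joint W q M w). \<not> decodes_correctly g w zu}"
  have "?P (abort_decoder M a g) w = a + (1 - a) * ?P g w" if "w \<in> {1..M}" for w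
    using measure_not_decodes_correctly_abort_decoder[OF
        measurable_dec_at_joint[OF assms(1) that, unfolded joint_eq_pair_unit_uniform]
        prob_space_step_process assms(2,3)] that
    unfolding joint_eq_pair_unit_uniform by simp
  then have "(\<Sum>w\<in>{1..M}. ?P (abort_decoder M a g) w) = real M * a + (1 - a) * (\<Sum>w\<in>{1..M}. ?P g w)"
    by (simp add: sum.distrib sum_distrib_left)
  with assms(4) show ?thesis
    unfolding error_prob_def by (simp add: field_simps)
qed

theorem lemma1:
  fixes W :: "'x::finite \<Rightarrow> 'y::finite pmf"
    and R eps alpha :: real and M :: nat
  assumes "\<exists>q g. is_code W q g R M eps"
    and "0 < alpha" and "alpha < 1"
  shows "\<exists>q' g'. is_code W q' g' (R / (1 - alpha)) M (alpha + eps - alpha * eps)"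
proof -
  obtain q g where "is_code W q g R M eps" using assms(1) by blast
  then have M: "M \<ge> 1" and dec: "decoder_measurable W q M g"
    and pos: "0 < exp_stop_time W q M g" and fin: "exp_stop_time W q M g < \<infinity>"
    and R: "R = log 2 (real M) / enn2real (exp_stop_time W q M g)"
    and err: "error_prob W q M g \<le> eps"
    unfolding is_code_def by auto
  let ?g' = "abort_decoder M alpha g"
  note E = exp_stop_time_abort_decoder[OF dec assms(2,3)]
  note P = error_prob_abort_decoder[OF dec assms(2,3) M]
  have "(1 - alpha) * error_prob W q M g \<le> (1 - alpha) * eps"
    using err assms(3) by (intro mult_left_mono) auto
  then have "is_code W q ?g' (R / (1 - alpha)) M (alpha + eps - alpha * eps)"
    using M decoder_measurable_abort_decoder[OF dec] pos fin assms(3)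
    unfolding is_code_def E P R
    by (simp add: ennreal_zero_less_mult_iff ennreal_mult_less_top enn2real_mult algebra_simps)
  then show ?thesis by blast
qed

end
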